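(* Consider the online convex optimization setting with stochastic gradients described in the context, and suppose Algorithm 1 is given oracle access to $N$ copies of a high-probability online linear optimizer with regret $R_{\mathcal A}(T)$. Then for any $\rho\in(0,1)$ and any sequence of convex losses $\ell_1,\dots,\ell_T\in\mathcal L$ over $\mathcal K$, with probability at least $1-\rho$, \[ \sum_{t=1}^T\ell_t(x_t)-\inf_{x^*\in\mathcal K}\sum_{t=1}^T\ell_t(x^* )\le\frac{2\beta D^2T}{N}+R_{\mathcal A}(T)+(\sigma+G)D\sqrt{2T\log(4N/\rho)}. \]
   Context: Let $\mathcal K\subset\mathbb R^d$ be a compact convex set of diameter $D$ (i.e. $\|x-x'\|\le D$ for all $x,x'\in\mathcal K$). A class $\mathcal L$ of convex functions on $\mathcal K$ is given; the losses $\ell_1,\dots,\ell_T\in\mathcal L$ are fixed in advance (oblivious adversary). Let $G$ bound $\|\nabla\ell(x)\|$ for all $\ell\in\mathcal L$, $x\in\mathcal K$. Assumptions: (A1) every $\ell\in\mathcal L$ is $\beta$-smooth: $\|\nabla\ell(x)-\nabla\ell(x')\|\le\beta\|x-x'\|$ for all $x,x'\in\mathcal K$; (A2) a stochastic gradient oracle $\mathcal O$, queried at round $t$ at a point $x\in\mathcal K$, returns a random vector $\mathbf g$ (using fresh randomness) with $\mathbb E[\mathbf g]=\nabla\ell_t(x)$ and $\|\mathbf g\|^2\le\sigma^2$. A high-probability online linear optimizer (OLO) over $\mathcal K$ is an online algorithm which at each round outputs a point of $\mathcal K$ based on the linear losses $\ell'_s(x)=g_s^\top x$ revealed in previous rounds,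 such that for any $\rho'\in(0,1)$ and any sequence of linear losses, with probability at least $1-\rho'$ its regret $\sum_{t}\ell'_t(x_t)-\min_{x\in\mathcal K}\sum_t\ell'_t(x)$ is at most $R_{\mathcal A}(T)$, sublinear in $T$. Algorithm 1: maintain $N$ OLOs $\mathcal A_1,\dots,\mathcal A_N$ and step sizes $\eta_i=\frac{2}{i+1}$. At each round $t=1,\dots,T$: set $\mathbf x_t^0=\mathbf 0$; for $i=1,\dots,N$: let $x_{t,i}\in\mathcal K$ be the output of $\mathcal A_i$ at round $t$ (having seen $\ell^i_1,\dots,\ell^i_{t-1}$), set $\mathbf x_t^i=(1-\eta_i)\mathbf x_t^{i-1}+\eta_i x_{t,i}$, query the oracle at $\mathbf x_t^{i-1}$ to get $\mathbf g_{t,i}$ with $\mathbb E[\mathbf g_{t,i}]=\nabla\ell_t(\mathbf x_t^{i-1})$, and pass the linear loss $\ell_t^i(x)=\mathbf g_{t,i}^\top x$ to $\mathcal A_i$. The prediction is $x_t=\mathbf x_t^N$, and the loss $\ell_t(x_t)$ is incurred. *)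

theory Defs
  imports "HOL-Probability.Probability"
begin

text \<open>Rounds are indexed t = 1..T, online linear optimizers (OLOs) i = 1..N.\<close>

definition with_prob_at_least :: "'m measure \<Rightarrow> real \<Rightarrow> ('m \<Rightarrow> bool) \<Rightarrow> bool" where
  "with_prob_at_least M p P \<longleftrightarrow> (\<exists>E\<in>sets M. measure M E \<ge> p \<and> (\<forall>\<omega>\<in>E. P \<omega>))"

definition olo_regret :: "'a::euclidean_space set \<Rightarrow> (nat \<Rightarrow> 'a) \<Rightarrow> (nat \<Rightarrow> 'a) \<Rightarrow> nat \<Rightarrow> real" where
  "olo_regret K g x n = (\<Sum>t=1..n. g t \<bullet> x t) - (INF y\<in>K. \<Sum>t=1..n. g t \<bullet> y)"

text \<open>A (randomized) OLO is a map A r t g: internal random seed r, round t, the sequence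
  of loss vectors g; its output at round t may only depend on g 1, ..., g (t-1).\<close>
definition olo_causal :: "('r \<Rightarrow> nat \<Rightarrow> (nat \<Rightarrow> 'a) \<Rightarrow> 'a) \<Rightarrow> bool" where
  "olo_causal A \<longleftrightarrow> (\<forall>r t g g'. (\<forall>s\<in>{1..<t}. g s = g' s) \<longrightarrow> A r t g = A r t g')"

text \<open>High-probability OLO over K with regret R, whose seed is the random variable U.
  The guarantee is required for loss vectors of norm bounded by sigma
  (the bound the stochastic oracle provides).\<close>
definition hp_olo :: "'m measure \<Rightarrow> 'a::euclidean_space set \<Rightarrow> real \<Rightarrow>
    ('r \<Rightarrow> nat \<Rightarrow> (nat \<Rightarrow> 'a) \<Rightarrow> 'a) \<Rightarrow> ('m \<Rightarrow> 'r) \<Rightarrow> (nat \<Rightarrow> real) \<Rightarrow> bool" where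
  "hp_olo M K \<sigma> A U R \<longleftrightarrow>
     (\<forall>r t g. A r t g \<in> K) \<and> olo_causal A \<and>
     (\<forall>n \<rho>' g. 0 < \<rho>' \<and> \<rho>' < 1 \<and> (\<forall>s\<in>{1..n}. (norm (g s))\<^sup>2 \<le> \<sigma>\<^sup>2) \<longrightarrow>
        with_prob_at_least M (1 - \<rho>') (\<lambda>\<omega>. olo_regret K g (\<lambda>t. A (U \<omega>) t g) n \<le> R n))"

definition fw_step :: "nat \<Rightarrow> real" where
  "fw_step i = 2 / (real i + 1)"

text \<open>Algorithm 1 for a realisation of the randomness: u i is the seed of OLO i,
  z t i the oracle noise of the query made for OLO i in round t, orc t x w the oracle
  answer in round t at point x with noise w. meta_fw A orc u z i t is the iterate x_t^i;
  the loss vector fed to OLO i in round s is orc s (x_s^(i-1)) (z s i).\<close>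
primrec meta_fw :: "('r \<Rightarrow> nat \<Rightarrow> (nat \<Rightarrow> 'a) \<Rightarrow> 'a) \<Rightarrow> (nat \<Rightarrow> 'a \<Rightarrow> 'r \<Rightarrow> 'a) \<Rightarrow>
    (nat \<Rightarrow> 'r) \<Rightarrow> (nat \<Rightarrow> nat \<Rightarrow> 'r) \<Rightarrow> nat \<Rightarrow> nat \<Rightarrow> 'a::real_vector" where
  "meta_fw A orc u z 0 t = 0"
| "meta_fw A orc u z (Suc i) t =
     (1 - fw_step (Suc i)) *\<^sub>R meta_fw A orc u z i t
     + fw_step (Suc i) *\<^sub>R A (u (Suc i)) t (\<lambda>s. orc s (meta_fw A orc u z i s) (z s (Suc i)))"

end

(*
  Let x_t^i be the iterates of Algorithm 1 and v_t^i the output of the i-th online learner.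
  For a convex beta-smooth loss, one Frank-Wolfe step with step size eta = 2/(i+2) gives
  Delta_(i+1) <= (1 - eta) Delta_i + eta B + eta^2 beta D^2 T / 2 for the optimality gap
  Delta_i = sum_t l_t(x_t^i) - sum_t l_t(x_opt), provided every linearized regret
  sum_t grad l_t(x_t^i) . (v_t^(i+1) - x_opt) is at most B; by induction Delta_N <= B + 2 beta D^2 T / N.

  The linearized regret splits into the regret of learner i+1 against the stochastic gradients
  g_(t,i+1) it actually receives, which is at most R_A(T), and the sum over t of
  (grad l_t(x_t^i) - g_(t,i+1)) . (v_t^(i+1) - x_opt). The seed of g_(t,i+1) is independent of all
  seeds the other factors depend on, so resampling that single seed shows that each term is
  centred and bounded by (sigma + G) D given the past. Hoeffding's lemma and induction over t make
  the sum sub-Gaussian, so by a Chernoff bound it exceeds (sigma + G) D sqrt(2 T log(4N/rho)) with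
  probability at most rho/(4N). A union bound over the N learners finishes the proof.
*)
theory Submission
  imports Defs
begin

section \<open>Smooth convex functions\<close>

lemma segment_in_convex:
  assumes "convex K" "x \<in> K" "y \<in> K" "s \<in> {0..1}"
  shows "x + s *\<^sub>R (y - x) \<in> K"
proof -
  have "x + s *\<^sub>R (y - x) = (1 - s) *\<^sub>R x + s *\<^sub>R y" by (simp add: algebra_simps)
  with assms show ?thesis by (auto intro: convexD)
qed

lemma has_derivative_along_segment:
  fixes f :: "'a::real_inner \<Rightarrow> real"
  assumes "convex K" "x \<in> K" "y \<in> K" "s \<in> {0..1}"
    and "\<And>z. z \<in> K \<Longrightarrow> (f has_derivative (\<lambda>h. f' z \<bullet> h)) (at z within K)"
  shows "((\<lambda>s. f (x + s *\<^sub>R (y - x))) has_real_derivative f' (x + s *\<^sub>R (y - x)) \<bullet> (y - x))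
           (at s within {0..1})"
proof -
  have "((\<lambda>s. x + s *\<^sub>R (y - x)) has_derivative (\<lambda>h. h *\<^sub>R (y - x))) (at s within {0..1})"
    by (auto intro!: derivative_eq_intros)
  moreover have "(\<lambda>s. x + s *\<^sub>R (y - x)) ` {0..1} \<subseteq> K"
    using segment_in_convex[OF assms(1-3)] by auto
  ultimately have "((\<lambda>s. f (x + s *\<^sub>R (y - x))) has_derivative
      (\<lambda>h. f' (x + s *\<^sub>R (y - x)) \<bullet> (h *\<^sub>R (y - x)))) (at s within {0..1})"
    using has_derivative_in_compose2[OF assms(5) _ assms(4)] by blast
  then show ?thesis
    unfolding has_field_derivative_def by (rule has_derivative_eq_rhs) (simp add: fun_eq_iff)
qed

lemma convex_on_gradient_inequality:
  fixes f :: "'a::real_inner \<Rightarrow> real"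
  assumes "convex_on K f" "x \<in> K" "y \<in> K"
    and "\<And>z. z \<in> K \<Longrightarrow> (f has_derivative (\<lambda>h. f' z \<bullet> h)) (at z within K)"
  shows "f x + f' x \<bullet> (y - x) \<le> f y"
proof -
  define \<phi> where "\<phi> = (\<lambda>s. f (x + s *\<^sub>R (y - x)))"
  have "(\<phi> has_real_derivative f' x \<bullet> (y - x)) (at 0 within {0..1})"
    using has_derivative_along_segment[OF convex_on_imp_convex[OF assms(1)] assms(2,3) _ assms(4), of 0]
    by (simp add: \<phi>_def)
  then have lim: "((\<lambda>s. (\<phi> s - \<phi> 0) / s) \<longlongrightarrow> f' x \<bullet> (y - x)) (at 0 within {0<..1})"
    unfolding has_field_derivative_iff
    by (simp add: tendsto_within_subset[where T="{0<..1}"] greaterThanAtMost_subseteq_atLeastAtMost_iff)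
  have "eventually (\<lambda>s. (\<phi> s - \<phi> 0) / s \<le> f y - f x) (at 0 within {0<..1})"
    unfolding eventually_at_filter
  proof (intro always_eventually allI impI)
    fix s :: real assume "s \<noteq> 0" and s: "s \<in> {0<..1}"
    have "x + s *\<^sub>R (y - x) = (1 - s) *\<^sub>R x + s *\<^sub>R y" by (simp add: algebra_simps)
    then have "\<phi> s \<le> (1 - s) * f x + s * f y"
      using convex_onD[OF assms(1), of s x y] s assms(2,3) by (simp add: \<phi>_def)
    then have "\<phi> s - \<phi> 0 \<le> (f y - f x) * s" by (simp add: \<phi>_def algebra_simps)
    then show "(\<phi> s - \<phi> 0) / s \<le> f y - f x" using s by (simp add: pos_divide_le_eq)
  qed
  moreover have "at 0 within {0<..1} \<noteq> (bot :: real filter)"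
    by (simp add: at_within_eq_bot_iff)
  ultimately have "f' x \<bullet> (y - x) \<le> f y - f x"
    using tendsto_le[OF _ tendsto_const lim] by blast
  then show ?thesis by simp
qed

lemma smooth_descent_inequality:
  fixes f :: "'a::real_inner \<Rightarrow> real"
  assumes K: "convex K" and x: "x \<in> K" and y: "y \<in> K"
    and deriv: "\<And>z. z \<in> K \<Longrightarrow> (f has_derivative (\<lambda>h. f' z \<bullet> h)) (at z within K)"
    and lipschitz: "\<And>z z'. z \<in> K \<Longrightarrow> z' \<in> K \<Longrightarrow> norm (f' z - f' z') \<le> \<beta> * norm (z - z')"
  shows "f y \<le> f x + f' x \<bullet> (y - x) + \<beta> / 2 * (norm (y - x))\<^sup>2"
proof -
  define p where "p = (\<lambda>s. x + s *\<^sub>R (y - x))"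
  define c where "c = (norm (y - x))\<^sup>2"
  define \<psi> where "\<psi> = (\<lambda>s. f (p s) - s * (f' x \<bullet> (y - x)) - \<beta> / 2 * c * s\<^sup>2)"
  have d\<psi>: "(\<psi> has_real_derivative f' (p s) \<bullet> (y - x) - f' x \<bullet> (y - x) - \<beta> * c * s) (at s within {0..1})"
    if "s \<in> {0..1}" for s
  proof -
    have "((\<lambda>s. f (p s)) has_real_derivative f' (p s) \<bullet> (y - x)) (at s within {0..1})"
      unfolding p_def by (rule has_derivative_along_segment[OF K x y that deriv])
    moreover have "((\<lambda>s. s * (f' x \<bullet> (y - x))) has_real_derivative f' x \<bullet> (y - x)) (at s within {0..1})"
      by (auto intro!: derivative_eq_intros)
    moreover have "((\<lambda>s. \<beta> / 2 * c * s\<^sup>2) has_real_derivative \<beta> * c * s) (at s within {0..1})"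
      by (auto intro!: derivative_eq_intros)
    ultimately show ?thesis
      unfolding \<psi>_def by (intro DERIV_diff)
  qed
  then obtain \<xi> where \<xi>: "\<xi> \<in> {0..1}"
    and mvt: "\<psi> 1 - \<psi> 0 = (f' (p \<xi>) \<bullet> (y - x) - f' x \<bullet> (y - x) - \<beta> * c * \<xi>) * (1 - 0)"
    using mvt_very_simple[of 0 1 \<psi> "\<lambda>s. (*) (f' (p s) \<bullet> (y - x) - f' x \<bullet> (y - x) - \<beta> * c * s)"]
    by (auto simp: d\<psi>[unfolded has_field_derivative_def])
  have "f' (p \<xi>) \<bullet> (y - x) - f' x \<bullet> (y - x) = (f' (p \<xi>) - f' x) \<bullet> (y - x)"
    by (simp add: inner_diff_left)
  also have "\<dots> \<le> norm (f' (p \<xi>) - f' x) * norm (y - x)"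
    by (rule norm_cauchy_schwarz)
  also have "\<dots> \<le> \<beta> * norm (p \<xi> - x) * norm (y - x)"
    unfolding p_def by (intro mult_right_mono lipschitz segment_in_convex[OF K x y \<xi>] x) simp
  also have "\<dots> = \<beta> * c * \<xi>"
    using \<xi> by (simp add: p_def c_def power2_eq_square)
  finally have "\<psi> 1 \<le> \<psi> 0" using mvt by simp
  then show ?thesis by (simp add: \<psi>_def p_def c_def)
qed

lemma compact_INF_attained:
  fixes f :: "'a::topological_space \<Rightarrow> real"
  assumes "compact K" "K \<noteq> {}" "continuous_on K f"
  obtains x where "x \<in> K" "(INF y\<in>K. f y) = f x"
proof -
  obtain x where x: "x \<in> K" "\<And>y. y \<in> K \<Longrightarrow> f x \<le> f y"
    using continuous_attains_inf[OF assms] by blast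
  then have "(INF y\<in>K. f y) = f x"
    by (intro antisym cINF_lower cINF_greatest bdd_belowI[where m="f x"]) auto
  with x(1) show ?thesis by (rule that)
qed

section \<open>The Frank-Wolfe recursion\<close>

lemma fw_step_Suc: "fw_step (Suc i) = 2 / (real i + 2)"
  by (simp add: fw_step_def add.commute)

lemma frank_wolfe_step_inequality:
  fixes f :: "'a::real_inner \<Rightarrow> real"
  assumes K: "convex K" and x: "x \<in> K" and v: "v \<in> K" and x_opt: "x_opt \<in> K"
    and diam: "\<And>z z'. z \<in> K \<Longrightarrow> z' \<in> K \<Longrightarrow> norm (z - z') \<le> D"
    and convex: "convex_on K f"
    and deriv: "\<And>z. z \<in> K \<Longrightarrow> (f has_derivative (\<lambda>h. f' z \<bullet> h)) (at z within K)"
    and lipschitz: "\<And>z z'. z \<in> K \<Longrightarrow> z' \<in> K \<Longrightarrow> norm (f' z - f' z') \<le> \<beta> * norm (z - z')"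
    and \<beta>: "0 \<le> \<beta>" and \<eta>: "0 \<le> \<eta>" "\<eta> \<le> 1"
  shows "f ((1 - \<eta>) *\<^sub>R x + \<eta> *\<^sub>R v) - f x_opt
           \<le> (1 - \<eta>) * (f x - f x_opt) + \<eta> * (f' x \<bullet> (v - x_opt)) + \<eta>\<^sup>2 * (\<beta> * D\<^sup>2 / 2)"
proof -
  define x' where "x' = (1 - \<eta>) *\<^sub>R x + \<eta> *\<^sub>R v"
  have step: "x' - x = \<eta> *\<^sub>R (v - x)" by (simp add: x'_def algebra_simps)
  have "x' \<in> K" using convexD_alt[OF K x v \<eta>] by (simp add: x'_def)
  then have descent: "f x' \<le> f x + f' x \<bullet> (x' - x) + \<beta> / 2 * (norm (x' - x))\<^sup>2"
    by (rule smooth_descent_inequality[OF K x _ deriv lipschitz])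
  have "norm (x' - x) \<le> \<eta> * D"
    using diam[OF v x] \<eta> by (simp add: step mult_left_mono)
  then have "\<beta> / 2 * (norm (x' - x))\<^sup>2 \<le> \<beta> / 2 * (\<eta> * D)\<^sup>2"
    using \<beta> by (intro mult_left_mono power_mono) auto
  moreover have "f' x \<bullet> (x' - x) = \<eta> * (f' x \<bullet> (v - x_opt)) + \<eta> * (f' x \<bullet> (x_opt - x))"
    by (simp add: step algebra_simps)
  moreover have "\<eta> * (f' x \<bullet> (x_opt - x)) \<le> \<eta> * (f x_opt - f x)"
    using convex_on_gradient_inequality[OF convex x x_opt deriv] \<eta> by (intro mult_left_mono) auto
  ultimately show ?thesis
    using descent by (simp add: x'_def power_mult_distrib algebra_simps)
qed

lemma frank_wolfe_recursion_bound:
  fixes \<Delta> :: "nat \<Rightarrow> real"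
  assumes rec: "\<And>i. i < n \<Longrightarrow>
      \<Delta> (Suc i) \<le> (1 - fw_step (Suc i)) * \<Delta> i + fw_step (Suc i) * B + (fw_step (Suc i))\<^sup>2 * C"
    and C: "0 \<le> C"
  shows "i < n \<Longrightarrow> \<Delta> (Suc i) \<le> B + 4 * C / (real i + 2)"
proof (induction i)
  case 0
  then show ?case using rec[of 0] C by (simp add: fw_step_def)
next
  case (Suc i)
  define a where "a = real i"
  define \<eta> where "\<eta> = 2 / (a + 3)"
  have a: "0 \<le> a" by (simp add: a_def)
  have \<eta>: "0 \<le> \<eta>" "\<eta> \<le> 1" using a by (auto simp: \<eta>_def)
  have IH: "\<Delta> (Suc i) - B \<le> 4 * C / (a + 2)" using Suc by (simp add: a_def)
  have "\<Delta> (Suc (Suc i)) \<le> (1 - \<eta>) * \<Delta> (Suc i) + \<eta> * B + \<eta>\<^sup>2 * C"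
    using rec[of "Suc i"] Suc.prems by (simp add: fw_step_Suc a_def \<eta>_def add.commute)
  also have "\<dots> = B + (1 - \<eta>) * (\<Delta> (Suc i) - B) + \<eta>\<^sup>2 * C"
    by (simp add: algebra_simps)
  also have "\<dots> \<le> B + (1 - \<eta>) * (4 * C / (a + 2)) + \<eta>\<^sup>2 * C"
    using IH \<eta> by (intro add_mono mult_left_mono) auto
  also have "\<dots> = B + 4 * C / (a + 3) - 4 * C / ((a + 2) * (a + 3)\<^sup>2)"
    using a by (simp add: \<eta>_def divide_simps power2_eq_square) algebra
  also have "\<dots> \<le> B + 4 * C / (a + 3)"
    using a C by simp
  finally show ?case by (simp add: a_def add.commute)
qed

text \<open>In the notation of Algorithm 1, fw_feedback orc A u z i s is the stochastic gradient
  g_(s,i+1) passed to learner i+1, and fw_olo_point orc A u z i t is its output x_(t,i+1).\<close>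
definition fw_feedback ::
    "(nat \<Rightarrow> 'a \<Rightarrow> 'r \<Rightarrow> 'a) \<Rightarrow> ('r \<Rightarrow> nat \<Rightarrow> (nat \<Rightarrow> 'a) \<Rightarrow> 'a) \<Rightarrow>
     (nat \<Rightarrow> 'r) \<Rightarrow> (nat \<Rightarrow> nat \<Rightarrow> 'r) \<Rightarrow> nat \<Rightarrow> nat \<Rightarrow> 'a::real_vector" where
  "fw_feedback orc A u z i s = orc s (meta_fw A orc u z i s) (z s (Suc i))"

definition fw_olo_point ::
    "(nat \<Rightarrow> 'a \<Rightarrow> 'r \<Rightarrow> 'a) \<Rightarrow> ('r \<Rightarrow> nat \<Rightarrow> (nat \<Rightarrow> 'a) \<Rightarrow> 'a) \<Rightarrow>
     (nat \<Rightarrow> 'r) \<Rightarrow> (nat \<Rightarrow> nat \<Rightarrow> 'r) \<Rightarrow> nat \<Rightarrow> nat \<Rightarrow> 'a::real_vector" where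
  "fw_olo_point orc A u z i t = A (u (Suc i)) t (fw_feedback orc A u z i)"

lemma meta_fw_Suc_eq:
  "meta_fw A orc u z (Suc i) t =
     (1 - fw_step (Suc i)) *\<^sub>R meta_fw A orc u z i t + fw_step (Suc i) *\<^sub>R fw_olo_point orc A u z i t"
  by (simp add: fw_olo_point_def fw_feedback_def[abs_def])

lemma meta_fw_in:
  assumes "convex K" "0 \<in> K" "\<And>r t g. A r t g \<in> K"
  shows "meta_fw A orc u z i t \<in> K"
proof (induction i)
  case (Suc i)
  have "0 \<le> fw_step (Suc i)" "fw_step (Suc i) \<le> 1" by (auto simp: fw_step_def)
  with Suc show ?case using assms by (auto intro!: convexD_alt)
qed (simp add: assms)

lemma meta_fw_loss_bound:
  fixes loss :: "nat \<Rightarrow> 'a::real_inner \<Rightarrow> real"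
  assumes K: "convex K" "0 \<in> K" and A_in: "\<And>r t g. A r t g \<in> K" and x_opt: "x_opt \<in> K"
    and diam: "\<And>x x'. x \<in> K \<Longrightarrow> x' \<in> K \<Longrightarrow> norm (x - x') \<le> D"
    and convex: "\<And>t. t \<in> {1..T} \<Longrightarrow> convex_on K (loss t)"
    and deriv: "\<And>t x. t \<in> {1..T} \<Longrightarrow> x \<in> K \<Longrightarrow>
                   (loss t has_derivative (\<lambda>h. grad t x \<bullet> h)) (at x within K)"
    and lipschitz: "\<And>t x x'. t \<in> {1..T} \<Longrightarrow> x \<in> K \<Longrightarrow> x' \<in> K \<Longrightarrow>
                   norm (grad t x - grad t x') \<le> \<beta> * norm (x - x')"
    and \<beta>: "0 \<le> \<beta>" and N: "N \<ge> 1"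
    and linearized_regret: "\<And>i. i < N \<Longrightarrow>
       (\<Sum>t=1..T. grad t (meta_fw A orc u z i t) \<bullet> (fw_olo_point orc A u z i t - x_opt)) \<le> B"
  shows "(\<Sum>t=1..T. loss t (meta_fw A orc u z N t)) - (\<Sum>t=1..T. loss t x_opt)
           \<le> B + 2 * \<beta> * D\<^sup>2 * real T / real N"
proof -
  define x where "x = meta_fw A orc u z"
  define \<Delta> where "\<Delta> i = (\<Sum>t=1..T. loss t (x i t)) - (\<Sum>t=1..T. loss t x_opt)" for i
  define C where "C = \<beta> * D\<^sup>2 * real T / 2"
  have rec: "\<Delta> (Suc i) \<le> (1 - fw_step (Suc i)) * \<Delta> i + fw_step (Suc i) * B + (fw_step (Suc i))\<^sup>2 * C"
    if "i < N" for i
  proof -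
    define \<eta> where "\<eta> = fw_step (Suc i)"
    have \<eta>: "0 \<le> \<eta>" "\<eta> \<le> 1" by (auto simp: \<eta>_def fw_step_def)
    have "\<Delta> (Suc i) = (\<Sum>t=1..T. loss t ((1 - \<eta>) *\<^sub>R x i t + \<eta> *\<^sub>R fw_olo_point orc A u z i t) - loss t x_opt)"
      by (simp add: \<Delta>_def x_def \<eta>_def meta_fw_Suc_eq sum_subtractf del: meta_fw.simps(2))
    also have "\<dots> \<le> (\<Sum>t=1..T. (1 - \<eta>) * (loss t (x i t) - loss t x_opt)
        + \<eta> * (grad t (x i t) \<bullet> (fw_olo_point orc A u z i t - x_opt)) + \<eta>\<^sup>2 * (\<beta> * D\<^sup>2 / 2))"
      unfolding x_def
      by (intro sum_mono frank_wolfe_step_inequality[OF K(1)] meta_fw_in[OF K A_in] x_opt \<beta> \<eta>)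
         (auto simp: fw_olo_point_def A_in diam convex deriv lipschitz)
    also have "\<dots> = (1 - \<eta>) * \<Delta> i
        + \<eta> * (\<Sum>t=1..T. grad t (x i t) \<bullet> (fw_olo_point orc A u z i t - x_opt)) + \<eta>\<^sup>2 * C"
      by (simp add: \<Delta>_def C_def sum.distrib sum_subtractf flip: sum_distrib_left)
    also have "\<dots> \<le> (1 - \<eta>) * \<Delta> i + \<eta> * B + \<eta>\<^sup>2 * C"
      using linearized_regret[OF that] \<eta> by (simp add: x_def mult_left_mono)
    finally show ?thesis by (simp add: \<eta>_def)
  qed
  have "0 \<le> C" using \<beta> by (simp add: C_def)
  obtain n where n: "N = Suc n" using N by (cases N) auto
  have "\<Delta> N \<le> B + 4 * C / (real n + 2)"
    using frank_wolfe_recursion_bound[OF rec \<open>0 \<le> C\<close>, where i=n] n by simp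
  also have "4 * C / (real n + 2) \<le> 2 * \<beta> * D\<^sup>2 * real T / real N"
    using \<open>0 \<le> C\<close> by (simp add: C_def n field_simps)
  finally show ?thesis by (simp add: \<Delta>_def x_def)
qed

lemma olo_causalD:
  "olo_causal A \<Longrightarrow> (\<And>s. s \<in> {1..<t} \<Longrightarrow> g s = g' s) \<Longrightarrow> A r t g = A r t g'"
  unfolding olo_causal_def by blast

lemma meta_fw_causal:
  assumes A: "olo_causal A"
    and u: "\<And>j. j \<in> {1..i} \<Longrightarrow> u j = u' j"
    and z: "\<And>s j. s \<in> {1..<t} \<Longrightarrow> j \<in> {1..i} \<Longrightarrow> z s j = z' s j"
  shows "t' \<le> t \<Longrightarrow> meta_fw A orc u z i t' = meta_fw A orc u' z' i t'"
  using u z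
proof (induction i arbitrary: t')
  case (Suc i)
  have IH: "meta_fw A orc u z i s = meta_fw A orc u' z' i s" if "s \<le> t" for s
    using Suc.IH[of s] Suc.prems that by auto
  have "fw_feedback orc A u z i s = fw_feedback orc A u' z' i s" if "s \<in> {1..<t'}" for s
    using IH[of s] Suc.prems that by (auto simp: fw_feedback_def)
  then have "fw_olo_point orc A u z i t' = fw_olo_point orc A u' z' i t'"
    using Suc.prems(2)[of "Suc i"] unfolding fw_olo_point_def by (auto intro: olo_causalD[OF A])
  then show ?case
    using IH[of t'] Suc.prems(1) by (simp add: meta_fw_Suc_eq del: meta_fw.simps(2))
qed simp

lemma fw_feedback_causal:
  assumes A: "olo_causal A"
    and u: "\<And>j. j \<in> {1..i} \<Longrightarrow> u j = u' j"
    and z: "\<And>s j. s \<in> {1..<t} \<Longrightarrow> j \<in> {1..Suc i} \<Longrightarrow> z s j = z' s j"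
  shows "s \<in> {1..<t} \<Longrightarrow> fw_feedback orc A u z i s = fw_feedback orc A u' z' i s"
proof -
  assume s: "s \<in> {1..<t}"
  have "meta_fw A orc u z i s = meta_fw A orc u' z' i s"
    by (rule meta_fw_causal[OF A u, where t=t]) (use z s in auto)
  then show ?thesis using z[OF s, of "Suc i"] by (simp add: fw_feedback_def)
qed

lemma fw_olo_point_causal:
  assumes A: "olo_causal A"
    and u: "\<And>j. j \<in> {1..Suc i} \<Longrightarrow> u j = u' j"
    and z: "\<And>s j. s \<in> {1..<t} \<Longrightarrow> j \<in> {1..Suc i} \<Longrightarrow> z s j = z' s j"
  shows "t' \<le> t \<Longrightarrow> fw_olo_point orc A u z i t' = fw_olo_point orc A u' z' i t'"
proof -
  assume t': "t' \<le> t"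
  have "fw_feedback orc A u z i s = fw_feedback orc A u' z' i s" if "s \<in> {1..<t'}" for s
    by (rule fw_feedback_causal[OF A _ z]) (use u that t' in auto)
  then show ?thesis
    using u[of "Suc i"] unfolding fw_olo_point_def by (auto intro!: olo_causalD[OF A])
qed

lemma measurable_fw_feedback:
  fixes A :: "'r \<Rightarrow> nat \<Rightarrow> (nat \<Rightarrow> 'a::euclidean_space) \<Rightarrow> 'a"
  assumes orc: "\<And>t. (\<lambda>(x, w). orc t x w) \<in> borel \<Otimes>\<^sub>M S \<rightarrow>\<^sub>M borel"
    and z: "\<And>s. (\<lambda>\<omega>. z \<omega> s (Suc i)) \<in> M \<rightarrow>\<^sub>M S"
    and x: "\<And>s. (\<lambda>\<omega>. meta_fw A orc (u \<omega>) (z \<omega>) i s) \<in> borel_measurable M"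
  shows "(\<lambda>\<omega>. fw_feedback orc A (u \<omega>) (z \<omega>) i) \<in> M \<rightarrow>\<^sub>M PiM UNIV (\<lambda>_. borel)"
proof (rule measurable_PiM_single')
  fix s
  have "(\<lambda>\<omega>. (meta_fw A orc (u \<omega>) (z \<omega>) i s, z \<omega> s (Suc i))) \<in> M \<rightarrow>\<^sub>M borel \<Otimes>\<^sub>M S"
    using x z by (rule measurable_Pair)
  from measurable_comp[OF this orc]
  show "(\<lambda>\<omega>. fw_feedback orc A (u \<omega>) (z \<omega>) i s) \<in> borel_measurable M"
    by (simp add: comp_def fw_feedback_def)
qed (auto simp: space_PiM)

lemma measurable_fw_olo_point:
  fixes A :: "'r \<Rightarrow> nat \<Rightarrow> (nat \<Rightarrow> 'a::euclidean_space) \<Rightarrow> 'a"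
  assumes A: "\<And>t. (\<lambda>(r, g). A r t g) \<in> S \<Otimes>\<^sub>M PiM UNIV (\<lambda>_::nat. borel) \<rightarrow>\<^sub>M borel"
    and u: "(\<lambda>\<omega>. u \<omega> (Suc i)) \<in> M \<rightarrow>\<^sub>M S"
    and g: "(\<lambda>\<omega>. fw_feedback orc A (u \<omega>) (z \<omega>) i) \<in> M \<rightarrow>\<^sub>M PiM UNIV (\<lambda>_. borel)"
  shows "(\<lambda>\<omega>. fw_olo_point orc A (u \<omega>) (z \<omega>) i t) \<in> borel_measurable M"
  using measurable_comp[OF measurable_Pair[OF u g] A] by (simp add: comp_def fw_olo_point_def)

lemma measurable_meta_fw:
  fixes A :: "'r \<Rightarrow> nat \<Rightarrow> (nat \<Rightarrow> 'a::euclidean_space) \<Rightarrow> 'a"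
  assumes orc: "\<And>t. (\<lambda>(x, w). orc t x w) \<in> borel \<Otimes>\<^sub>M S \<rightarrow>\<^sub>M borel"
    and A: "\<And>t. (\<lambda>(r, g). A r t g) \<in> S \<Otimes>\<^sub>M PiM UNIV (\<lambda>_::nat. borel) \<rightarrow>\<^sub>M borel"
    and u: "\<And>i. (\<lambda>\<omega>. u \<omega> i) \<in> M \<rightarrow>\<^sub>M S" and z: "\<And>s i. (\<lambda>\<omega>. z \<omega> s i) \<in> M \<rightarrow>\<^sub>M S"
  shows "(\<lambda>\<omega>. meta_fw A orc (u \<omega>) (z \<omega>) i t) \<in> borel_measurable M"
proof (induction i arbitrary: t)
  case (Suc i)
  have v: "(\<lambda>\<omega>. fw_olo_point orc A (u \<omega>) (z \<omega>) i t) \<in> borel_measurable M"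
    by (intro measurable_fw_olo_point[OF A u] measurable_fw_feedback[OF orc z Suc.IH])
  show ?case
    unfolding meta_fw_Suc_eq
    by (intro borel_measurable_add borel_measurable_scaleR borel_measurable_const Suc.IH v)
qed simp

lemma INF_inner_sum_le:
  fixes g :: "nat \<Rightarrow> 'a::real_inner"
  assumes "compact K" "x \<in> K"
  shows "(INF y\<in>K. \<Sum>t=1..n. g t \<bullet> y) \<le> (\<Sum>t=1..n. g t \<bullet> x)"
proof (rule cINF_lower[OF _ assms(2)])
  have "compact ((\<lambda>y. \<Sum>t=1..n. g t \<bullet> y) ` K)"
    by (intro compact_continuous_image continuous_intros assms(1))
  then show "bdd_below ((\<lambda>y. \<Sum>t=1..n. g t \<bullet> y) ` K)"
    by (intro bounded_imp_bdd_below compact_imp_bounded)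
qed

lemma olo_regret_ge_comparator:
  assumes "compact K" "x \<in> K"
  shows "(\<Sum>t=1..n. g t \<bullet> (v t - x)) \<le> olo_regret K g v n"
  using INF_inner_sum_le[OF assms, where n=n and g=g]
  by (simp add: olo_regret_def inner_diff_right sum_subtractf)

section \<open>Independence and concentration\<close>

lemma borel_measurable_continuous_on_comp:
  fixes f :: "'a::topological_space \<Rightarrow> 'b::real_normed_vector"
  assumes "A \<in> sets borel" "continuous_on A f" "g \<in> borel_measurable M"
    and "\<And>x. x \<in> space M \<Longrightarrow> g x \<in> A"
  shows "(\<lambda>x. f (g x)) \<in> borel_measurable M"
proof -
  have "(\<lambda>x. indicator A (g x) *\<^sub>R f (g x)) \<in> borel_measurable M"
    using measurable_comp[OF assms(3) borel_measurable_continuous_on_indicator[OF assms(1,2)]]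
    by (simp add: comp_def)
  then show ?thesis
    by (rule measurable_cong[THEN iffD1, rotated]) (use assms(4) in \<open>auto simp: indicator_def\<close>)
qed

lemma (in prob_space) nn_integral_indep_var_iterated:
  assumes indep: "indep_var N1 Y N2 Z" and h: "h \<in> borel_measurable (N1 \<Otimes>\<^sub>M N2)"
  shows "(\<integral>\<^sup>+\<omega>. h (Y \<omega>, Z \<omega>) \<partial>M) = (\<integral>\<^sup>+\<omega>. (\<integral>\<^sup>+\<omega>'. h (Y \<omega>, Z \<omega>') \<partial>M) \<partial>M)"
proof -
  have Y: "random_variable N1 Y" and Z: "random_variable N2 Z"
    and joint: "distr M N1 Y \<Otimes>\<^sub>M distr M N2 Z = distr M (N1 \<Otimes>\<^sub>M N2) (\<lambda>\<omega>. (Y \<omega>, Z \<omega>))"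
    using indep unfolding indep_var_distribution_eq by auto
  interpret PZ: prob_space "distr M N2 Z" by (rule prob_space_distr[OF Z])
  have h': "h \<in> borel_measurable (distr M N1 Y \<Otimes>\<^sub>M distr M N2 Z)"
    using h by (simp cong: measurable_cong_sets)
  have "(\<integral>\<^sup>+\<omega>. h (Y \<omega>, Z \<omega>) \<partial>M) = (\<integral>\<^sup>+p. h p \<partial>distr M (N1 \<Otimes>\<^sub>M N2) (\<lambda>\<omega>. (Y \<omega>, Z \<omega>)))"
    by (rule nn_integral_distr[symmetric]) (use Y Z h in auto)
  also have "\<dots> = (\<integral>\<^sup>+y. (\<integral>\<^sup>+z. h (y, z) \<partial>distr M N2 Z) \<partial>distr M N1 Y)"
    unfolding joint[symmetric] by (rule PZ.nn_integral_fst[symmetric, OF h'])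
  also have "\<dots> = (\<integral>\<^sup>+\<omega>. (\<integral>\<^sup>+z. h (Y \<omega>, z) \<partial>distr M N2 Z) \<partial>M)"
    by (rule nn_integral_distr[OF Y PZ.borel_measurable_nn_integral_fst[OF h']])
  also have "\<dots> = (\<integral>\<^sup>+\<omega>. (\<integral>\<^sup>+\<omega>'. h (Y \<omega>, Z \<omega>') \<partial>M) \<partial>M)"
  proof (rule nn_integral_cong)
    fix \<omega> assume "\<omega> \<in> space M"
    then have "Y \<omega> \<in> space N1" using Y by (auto simp: measurable_def)
    then have "(\<lambda>z. h (Y \<omega>, z)) \<in> borel_measurable N2" using h by (rule measurable_compose_Pair1)
    then show "(\<integral>\<^sup>+z. h (Y \<omega>, z) \<partial>distr M N2 Z) = (\<integral>\<^sup>+\<omega>'. h (Y \<omega>, Z \<omega>') \<partial>M)"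
      by (intro nn_integral_distr[OF Z]) (simp cong: measurable_cong_sets)
  qed
  finally show ?thesis .
qed

lemma measurable_extend_const:
  assumes "c \<in> space S"
  shows "(\<lambda>\<xi> j. if j \<in> J then \<xi> j else c) \<in> PiM J (\<lambda>_. S) \<rightarrow>\<^sub>M PiM UNIV (\<lambda>_. S)"
proof (rule measurable_PiM_single')
  fix j
  show "(\<lambda>\<xi>. if j \<in> J then \<xi> j else c) \<in> PiM J (\<lambda>_. S) \<rightarrow>\<^sub>M S"
    by (cases "j \<in> J") (auto simp: assms)
qed (auto simp: space_PiM assms PiE_iff)

lemma (in prob_space) indep_var_extend_const:
  assumes indep: "indep_vars (\<lambda>_. S) X I" and J: "J \<inter> J' = {}" "J \<subseteq> I" "J' \<subseteq> I"
    and c: "c \<in> space S"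
  shows "indep_var (PiM UNIV (\<lambda>_. S)) (\<lambda>\<omega> j. if j \<in> J then X j \<omega> else c)
                   (PiM UNIV (\<lambda>_. S)) (\<lambda>\<omega> j. if j \<in> J' then X j \<omega> else c)"
proof -
  have "indep_var (PiM J (\<lambda>_. S)) (\<lambda>\<omega>. restrict (\<lambda>j. X j \<omega>) J) (PiM J' (\<lambda>_. S)) (\<lambda>\<omega>. restrict (\<lambda>j. X j \<omega>) J')"
    by (rule indep_var_restrict[OF indep J])
  from indep_var_compose[OF this measurable_extend_const[OF c] measurable_extend_const[OF c]]
  show ?thesis by (simp add: comp_def cong: if_cong)
qed

lemma (in prob_space) nn_integral_resample_coordinate:
  assumes indep: "indep_vars (\<lambda>_. S) X I" and j: "j \<in> I" and c: "c \<in> space S"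
    and h: "h \<in> borel_measurable (PiM UNIV (\<lambda>_. S))"
  defines "X' \<equiv> \<lambda>\<omega> i. if i \<in> I then X i \<omega> else c"
  shows "(\<integral>\<^sup>+\<omega>. h (X' \<omega>) \<partial>M) = (\<integral>\<^sup>+\<omega>. (\<integral>\<^sup>+\<omega>'. h ((X' \<omega>)(j := X j \<omega>')) \<partial>M) \<partial>M)"
proof -
  define Y where "Y \<omega> i = (if i \<in> I - {j} then X i \<omega> else c)" for \<omega> i
  define Z where "Z \<omega> i = (if i \<in> {j} then X i \<omega> else c)" for \<omega> i
  have YZ: "indep_var (PiM UNIV (\<lambda>_. S)) Y (PiM UNIV (\<lambda>_. S)) Z"
    unfolding Y_def[abs_def] Z_def[abs_def]
    by (rule indep_var_extend_const[OF indep _ _ _ c]) (use j in auto)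
  define g where "g p = h ((fst p)(j := snd p j))" for p
  have "(\<lambda>p. (fst p)(j := snd p j)) \<in> PiM UNIV (\<lambda>_. S) \<Otimes>\<^sub>M PiM UNIV (\<lambda>_. S) \<rightarrow>\<^sub>M PiM UNIV (\<lambda>_. S)"
    by (rule measurable_fun_upd[where J=UNIV]) simp_all
  then have g: "g \<in> borel_measurable (PiM UNIV (\<lambda>_. S) \<Otimes>\<^sub>M PiM UNIV (\<lambda>_. S))"
    unfolding g_def using h by (rule measurable_compose)
  have "X' \<omega> = (Y \<omega>)(j := Z \<omega> j)" "(X' \<omega>)(j := X j \<omega>') = (Y \<omega>)(j := Z \<omega>' j)" for \<omega> \<omega>'
    using j by (auto simp: X'_def Y_def Z_def)
  then show ?thesis
    using nn_integral_indep_var_iterated[OF YZ g] by (simp add: g_def)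
qed

lemma emeasure_Collect_eq_nn_integral_indicator:
  "{x \<in> space M. f x \<in> B} \<in> sets M \<Longrightarrow>
     emeasure M {x \<in> space M. f x \<in> B} = (\<integral>\<^sup>+x. indicator B (f x) \<partial>M)"
  by (simp flip: nn_integral_indicator add: indicator_def cong: nn_integral_cong)

lemma with_prob_at_least_mono:
  assumes "with_prob_at_least M p P" "\<And>\<omega>. \<omega> \<in> space M \<Longrightarrow> P \<omega> \<Longrightarrow> Q \<omega>"
  shows "with_prob_at_least M p Q"
  using assms sets.sets_into_space unfolding with_prob_at_least_def by blast

lemma (in prob_space) prob_eq_0_if_avoided_with_prob_near_1:
  assumes B: "B \<in> events"
    and avoid: "\<And>e. 0 < e \<Longrightarrow> e < 1 \<Longrightarrow> with_prob_at_least M (1 - e) (\<lambda>\<omega>. \<omega> \<notin> B)"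
  shows "prob B = 0"
proof -
  have small: "prob B \<le> e" if e: "0 < e" "e < 1" for e
  proof -
    obtain E where E: "E \<in> events" "1 - e \<le> prob E" and "\<forall>\<omega>\<in>E. \<omega> \<notin> B"
      using avoid[OF e] unfolding with_prob_at_least_def by blast
    then have "prob B \<le> prob (space M - E)"
      using B by (intro finite_measure_mono) (auto dest: sets.sets_into_space)
    also have "\<dots> = 1 - prob E" using E(1) by (rule prob_compl)
    finally show ?thesis using E(2) by simp
  qed
  have "prob B \<le> 0"
  proof (rule field_le_epsilon)
    fix e :: real assume "0 < e"
    then have "prob B \<le> min e (1 / 2)" by (intro small) auto
    then show "prob B \<le> 0 + e" by simp
  qed
  then show ?thesis by (simp add: antisym)
qed

lemma (in prob_space) nn_integral_exp_le_of_centered_bounded: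
  assumes f: "f \<in> borel_measurable M" and bound: "\<And>\<omega>. \<omega> \<in> space M \<Longrightarrow> \<bar>f \<omega>\<bar> \<le> c"
    and centered: "expectation f = 0" and l: "0 < l"
  shows "(\<integral>\<^sup>+\<omega>. ennreal (exp (l * f \<omega>)) \<partial>M) \<le> ennreal (exp (l\<^sup>2 * c\<^sup>2 / 2))"
proof -
  interpret interval_bounded_random_variable M f "- c" c
  proof unfold_locales
    show "AE \<omega> in M. f \<omega> \<in> {- c..c}" using bound by (intro AE_I2) (force simp: abs_le_iff)
  qed (rule f)
  have "(\<integral>\<^sup>+\<omega>. ennreal (exp (l * f \<omega>)) \<partial>M) \<le> ennreal (exp (l\<^sup>2 * (c - - c)\<^sup>2 / 8))"
    by (rule Hoeffdings_lemma_nn_integral_0[OF l centered])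
  also have "l\<^sup>2 * (c - - c)\<^sup>2 / 8 = l\<^sup>2 * c\<^sup>2 / 2" by (simp add: power2_eq_square algebra_simps)
  finally show ?thesis .
qed

lemma (in prob_space) subgaussian_tail_bound:
  assumes f: "f \<in> borel_measurable M" and v: "0 < v"
    and mgf: "\<And>l. 0 < l \<Longrightarrow> (\<integral>\<^sup>+\<omega>. ennreal (exp (l * f \<omega>)) \<partial>M) \<le> ennreal (exp (l\<^sup>2 * v / 2))"
    and \<delta>: "0 < \<delta>" "\<delta> < 1"
  shows "prob {\<omega> \<in> space M. sqrt (2 * v * ln (1 / \<delta>)) \<le> f \<omega>} \<le> \<delta>"
proof -
  define a where "a = sqrt (2 * v * ln (1 / \<delta>))"
  have a: "0 < a" using v \<delta> by (simp add: a_def)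
  define l where "l = a / v"
  have l: "0 < l" using a v by (simp add: l_def)
  have "emeasure M {\<omega> \<in> space M. a \<le> f \<omega>}
      \<le> ennreal (exp (- l * a)) * (\<integral>\<^sup>+\<omega>. ennreal (exp (l * f \<omega>)) * indicator (space M) \<omega> \<partial>M)"
    by (rule Chernoff_ineq_nn_integral_ge[OF l]) (use f in auto)
  also have "(\<integral>\<^sup>+\<omega>. ennreal (exp (l * f \<omega>)) * indicator (space M) \<omega> \<partial>M)
           = (\<integral>\<^sup>+\<omega>. ennreal (exp (l * f \<omega>)) \<partial>M)"
    by (rule nn_integral_cong) auto
  also have "ennreal (exp (- l * a)) * \<dots> \<le> ennreal (exp (- l * a)) * ennreal (exp (l\<^sup>2 * v / 2))"
    by (intro mult_left_mono mgf[OF l]) auto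
  also have "\<dots> = ennreal (exp (- l * a + l\<^sup>2 * v / 2))"
    unfolding exp_add by (rule ennreal_mult[symmetric]) auto
  also have "- l * a + l\<^sup>2 * v / 2 = - a\<^sup>2 / (2 * v)"
    using v by (simp add: l_def power2_eq_square field_simps)
  also have "a\<^sup>2 = 2 * v * ln (1 / \<delta>)"
    using v \<delta> by (simp add: a_def)
  also have "- (2 * v * ln (1 / \<delta>)) / (2 * v) = ln \<delta>"
    using v \<delta> by (simp add: ln_div)
  finally show ?thesis
    using \<delta> by (simp add: a_def emeasure_eq_measure)
qed

section \<open>Algorithm 1 with stochastic gradients\<close>

locale stochastic_meta_fw = prob_space M
  for M :: "'m measure" +
  fixes K :: "'a::euclidean_space set" and D G \<sigma> :: real and grad :: "nat \<Rightarrow> 'a \<Rightarrow> 'a"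
    and S :: "'r measure" and X :: "nat + nat \<times> nat \<Rightarrow> 'm \<Rightarrow> 'r"
    and orc :: "nat \<Rightarrow> 'a \<Rightarrow> 'r \<Rightarrow> 'a" and A :: "'r \<Rightarrow> nat \<Rightarrow> (nat \<Rightarrow> 'a) \<Rightarrow> 'a"
    and R :: "nat \<Rightarrow> real" and N T :: nat and x_opt :: 'a
  assumes K_compact: "compact K" and K_convex: "convex K" and K_zero: "0 \<in> K"
    and diam: "\<forall>x\<in>K. \<forall>x'\<in>K. norm (x - x') \<le> D"
    and grad_cont: "\<forall>t\<in>{1..T}. continuous_on K (grad t)"
    and grad_bound: "\<forall>t\<in>{1..T}. \<forall>x\<in>K. norm (grad t x) \<le> G"
    and indep: "indep_vars (\<lambda>_. S) X (Inl ` {1..N} \<union> Inr ` ({1..T} \<times> {1..N}))"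
    and orc_meas: "\<forall>t. (\<lambda>(x, w). orc t x w) \<in> borel \<Otimes>\<^sub>M S \<rightarrow>\<^sub>M borel"
    and unbiased: "\<forall>t\<in>{1..T}. \<forall>i\<in>{1..N}. \<forall>x\<in>K.
                     integrable M (\<lambda>\<omega>. orc t x (X (Inr (t, i)) \<omega>)) \<and>
                     (\<integral>\<omega>. orc t x (X (Inr (t, i)) \<omega>) \<partial>M) = grad t x"
    and oracle_bound: "0 \<le> \<sigma>" "\<forall>t\<in>{1..T}. \<forall>i\<in>{1..N}. \<forall>x\<in>K. \<forall>\<omega>\<in>space M.
                     (norm (orc t x (X (Inr (t, i)) \<omega>)))\<^sup>2 \<le> \<sigma>\<^sup>2"
    and A_meas: "\<forall>t. (\<lambda>(r, g). A r t g) \<in> S \<Otimes>\<^sub>M PiM UNIV (\<lambda>_::nat. borel) \<rightarrow>\<^sub>M borel"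
    and olo: "\<forall>i\<in>{1..N}. hp_olo M K \<sigma> A (X (Inl i)) R"
    and N: "N \<ge> 1"
    and x_opt: "x_opt \<in> K"
begin

definition seed_idx :: "(nat + nat \<times> nat) set" where
  "seed_idx = Inl ` {1..N} \<union> Inr ` ({1..T} \<times> {1..N})"

definition dummy_seed :: 'r where
  "dummy_seed = (SOME c. c \<in> space S)"

text \<open>The seeds X j outside seed_idx need not even be measurable; overwriting them by a fixed
  point of S turns the whole seed family into a random element of the product space.\<close>
definition seeds :: "'m \<Rightarrow> nat + nat \<times> nat \<Rightarrow> 'r" where
  "seeds \<omega> = (\<lambda>j. if j \<in> seed_idx then X j \<omega> else dummy_seed)"

abbreviation "seed_space \<equiv> PiM UNIV (\<lambda>_::nat + nat \<times> nat. S)"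

abbreviation "iterate \<xi> \<equiv> meta_fw A orc (\<lambda>i. \<xi> (Inl i)) (\<lambda>t i. \<xi> (Inr (t, i)))"
abbreviation "feedback \<xi> \<equiv> fw_feedback orc A (\<lambda>i. \<xi> (Inl i)) (\<lambda>t i. \<xi> (Inr (t, i)))"
abbreviation "olo_point \<xi> \<equiv> fw_olo_point orc A (\<lambda>i. \<xi> (Inl i)) (\<lambda>t i. \<xi> (Inr (t, i)))"

abbreviation "run_iterate \<omega> \<equiv> meta_fw A orc (\<lambda>i. X (Inl i) \<omega>) (\<lambda>t i. X (Inr (t, i)) \<omega>)"
abbreviation "run_olo_point \<omega> \<equiv> fw_olo_point orc A (\<lambda>i. X (Inl i) \<omega>) (\<lambda>t i. X (Inr (t, i)) \<omega>)"

definition noise_term :: "(nat + nat \<times> nat \<Rightarrow> 'r) \<Rightarrow> nat \<Rightarrow> nat \<Rightarrow> real" where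
  "noise_term \<xi> i t = (grad t (iterate \<xi> i t) - feedback \<xi> i t) \<bullet> (olo_point \<xi> i t - x_opt)"

definition noise_sum :: "(nat + nat \<times> nat \<Rightarrow> 'r) \<Rightarrow> nat \<Rightarrow> nat \<Rightarrow> real" where
  "noise_sum \<xi> i n = (\<Sum>t=1..n. noise_term \<xi> i t)"

lemma indep_seeds: "indep_vars (\<lambda>_. S) X seed_idx"
  using indep by (simp add: seed_idx_def)

lemma X_measurable: "j \<in> seed_idx \<Longrightarrow> X j \<in> M \<rightarrow>\<^sub>M S"
  using indep_seeds unfolding indep_vars_def by auto

lemma dummy_seed_in: "dummy_seed \<in> space S"
proof -
  obtain \<omega> where "\<omega> \<in> space M" using not_empty by blast
  moreover have "Inl 1 \<in> seed_idx" using N by (auto simp: seed_idx_def)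
  ultimately have "X (Inl 1) \<omega> \<in> space S" using X_measurable by (auto simp: measurable_def)
  then show ?thesis unfolding dummy_seed_def by (rule someI)
qed

lemma seeds_measurable[measurable]: "seeds \<in> M \<rightarrow>\<^sub>M seed_space"
  unfolding seeds_def
proof (rule measurable_PiM_single')
  fix j
  show "(\<lambda>\<omega>. if j \<in> seed_idx then X j \<omega> else dummy_seed) \<in> M \<rightarrow>\<^sub>M S"
    by (cases "j \<in> seed_idx") (auto simp: X_measurable dummy_seed_in)
qed (use X_measurable dummy_seed_in in \<open>auto simp: measurable_def Pi_iff\<close>)

lemma A_in: "A r t g \<in> K" and A_causal: "olo_causal A"
  using olo N unfolding hp_olo_def by auto

lemma iterate_in: "iterate \<xi> i t \<in> K"
  by (rule meta_fw_in[OF K_convex K_zero A_in])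

lemma olo_point_in: "olo_point \<xi> i t \<in> K"
  by (simp add: fw_olo_point_def A_in)

lemma measurable_iterate[measurable]: "(\<lambda>\<xi>. iterate \<xi> i t) \<in> borel_measurable seed_space"
  by (rule measurable_meta_fw) (use orc_meas A_meas in auto)

lemma measurable_feedback_seq[measurable]:
  "(\<lambda>\<xi>. feedback \<xi> i) \<in> seed_space \<rightarrow>\<^sub>M PiM UNIV (\<lambda>_. borel)"
  by (rule measurable_fw_feedback) (use orc_meas measurable_iterate in auto)

lemma measurable_feedback[measurable]: "(\<lambda>\<xi>. feedback \<xi> i s) \<in> borel_measurable seed_space"
  using measurable_compose[OF measurable_feedback_seq measurable_component_singleton] by simp

lemma measurable_olo_point[measurable]: "(\<lambda>\<xi>. olo_point \<xi> i t) \<in> borel_measurable seed_space"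
  by (rule measurable_fw_olo_point) (use A_meas measurable_feedback_seq in auto)

lemma measurable_grad_iterate:
  "t \<in> {1..T} \<Longrightarrow> (\<lambda>\<xi>. grad t (iterate \<xi> i t)) \<in> borel_measurable seed_space"
  by (rule borel_measurable_continuous_on_comp[where A=K, OF _ _ measurable_iterate])
     (use K_compact grad_cont iterate_in in \<open>auto intro: borel_closed compact_imp_closed\<close>)

lemma measurable_noise_sum: "n \<le> T \<Longrightarrow> (\<lambda>\<xi>. noise_sum \<xi> i n) \<in> borel_measurable seed_space"
  unfolding noise_sum_def noise_term_def
  by (intro borel_measurable_sum borel_measurable_inner borel_measurable_diff borel_measurable_const
        measurable_grad_iterate measurable_feedback measurable_olo_point) auto

lemma feedback_upd_olo_seed:
  "1 \<le> s \<Longrightarrow> feedback (\<xi>(Inl (Suc k) := r)) k s = feedback \<xi> k s"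
  by (rule fw_feedback_causal[OF A_causal, where t="Suc s"]) auto

lemma olo_point_upd_olo_seed: "olo_point (\<xi>(Inl (Suc k) := r)) k t = A r t (feedback \<xi> k)"
proof -
  have "olo_point (\<xi>(Inl (Suc k) := r)) k t = A r t (feedback (\<xi>(Inl (Suc k) := r)) k)"
    by (simp only: fw_olo_point_def fun_upd_same)
  also have "\<dots> = A r t (feedback \<xi> k)"
    by (rule olo_causalD[OF A_causal], rule feedback_upd_olo_seed) simp
  finally show ?thesis .
qed

lemma noise_sum_Suc: "noise_sum \<xi> i (Suc n) = noise_sum \<xi> i n + noise_term \<xi> i (Suc n)"
  by (simp add: noise_sum_def)

lemma noise_sum_upd_oracle_seed:
  fixes \<xi> :: "nat + nat \<times> nat \<Rightarrow> 'r" and k n :: nat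
  defines "x \<equiv> iterate \<xi> k (Suc n)"
  shows "noise_sum (\<xi>(Inr (Suc n, Suc k) := w)) k (Suc n) = noise_sum \<xi> k n
           + (grad (Suc n) x - orc (Suc n) x w) \<bullet> (olo_point \<xi> k (Suc n) - x_opt)"
proof -
  let ?\<xi>' = "\<xi>(Inr (Suc n, Suc k) := w)"
  have iterate: "iterate ?\<xi>' k t = iterate \<xi> k t" if "t \<le> Suc n" for t
    by (rule meta_fw_causal[OF A_causal, where t="Suc n"]) (use that in auto)
  have feedback: "feedback ?\<xi>' k s = feedback \<xi> k s" if "s \<in> {1..<Suc n}" for s
    by (rule fw_feedback_causal[OF A_causal, where t="Suc n"]) (use that in auto)
  have olo_point: "olo_point ?\<xi>' k t = olo_point \<xi> k t" if "t \<le> Suc n" for t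
    by (rule fw_olo_point_causal[OF A_causal, where t="Suc n"]) (use that in auto)
  have "noise_term ?\<xi>' k t = noise_term \<xi> k t" if "t \<in> {1..n}" for t
  proof -
    have "t \<le> Suc n" "t \<in> {1..<Suc n}" using that by auto
    then show ?thesis
      using iterate feedback olo_point by (simp only: noise_term_def)
  qed
  then have "noise_sum ?\<xi>' k n = noise_sum \<xi> k n"
    unfolding noise_sum_def by (rule sum.cong[OF refl])
  moreover have "feedback ?\<xi>' k (Suc n) = orc (Suc n) x w"
    unfolding fw_feedback_def iterate[OF order_refl] x_def by simp
  moreover have "iterate ?\<xi>' k (Suc n) = x" "olo_point ?\<xi>' k (Suc n) = olo_point \<xi> k (Suc n)"
    by (simp_all only: iterate olo_point x_def order_refl)
  ultimately show ?thesis
    by (simp only: noise_sum_Suc noise_term_def)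
qed

lemma D_nonneg: "0 \<le> D"
  using diam K_zero by (metis norm_ge_zero order_trans)

lemma oracle_noise_bound:
  assumes t: "t \<in> {1..T}" and i: "i \<in> {1..N}" and x: "x \<in> K" and v: "norm v \<le> D"
    and \<omega>: "\<omega> \<in> space M"
  shows "\<bar>(grad t x - orc t x (X (Inr (t, i)) \<omega>)) \<bullet> v\<bar> \<le> (\<sigma> + G) * D"
proof -
  have "norm (orc t x (X (Inr (t, i)) \<omega>)) \<le> \<sigma>"
    using oracle_bound t i x \<omega> by (metis power2_le_imp_le)
  moreover have "norm (grad t x) \<le> G" using grad_bound t x by auto
  ultimately have "norm (grad t x - orc t x (X (Inr (t, i)) \<omega>)) \<le> \<sigma> + G"
    using norm_triangle_ineq4[of "grad t x" "orc t x (X (Inr (t, i)) \<omega>)"] by linarith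
  moreover have "0 \<le> \<sigma> + G" using \<open>norm (grad t x) \<le> G\<close> oracle_bound(1) norm_ge_zero[of "grad t x"] by linarith
  ultimately have "norm (grad t x - orc t x (X (Inr (t, i)) \<omega>)) * norm v \<le> (\<sigma> + G) * D"
    using v by (intro mult_mono) auto
  then show ?thesis by (rule order_trans[OF Cauchy_Schwarz_ineq2])
qed

lemma oracle_noise_mgf:
  assumes t: "t \<in> {1..T}" and i: "i \<in> {1..N}" and x: "x \<in> K" and v: "norm v \<le> D"
    and l: "0 < l"
  shows "(\<integral>\<^sup>+\<omega>. ennreal (exp (l * ((grad t x - orc t x (X (Inr (t, i)) \<omega>)) \<bullet> v))) \<partial>M)
           \<le> ennreal (exp (l\<^sup>2 * ((\<sigma> + G) * D)\<^sup>2 / 2))"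
proof (rule nn_integral_exp_le_of_centered_bounded[OF _ oracle_noise_bound[OF t i x v] _ l])
  have "Inr (t, i) \<in> seed_idx" using t i by (auto simp: seed_idx_def)
  then have "(\<lambda>\<omega>. (x, X (Inr (t, i)) \<omega>)) \<in> M \<rightarrow>\<^sub>M borel \<Otimes>\<^sub>M S"
    using X_measurable by (intro measurable_Pair) auto
  from measurable_comp[OF this orc_meas[rule_format, of t]]
  show "(\<lambda>\<omega>. (grad t x - orc t x (X (Inr (t, i)) \<omega>)) \<bullet> v) \<in> borel_measurable M"
    by (simp add: comp_def)
  have int: "integrable M (\<lambda>\<omega>. orc t x (X (Inr (t, i)) \<omega>))"
    and mean: "(\<integral>\<omega>. orc t x (X (Inr (t, i)) \<omega>) \<partial>M) = grad t x"
    using unbiased t i x by auto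
  show "expectation (\<lambda>\<omega>. (grad t x - orc t x (X (Inr (t, i)) \<omega>)) \<bullet> v) = 0"
    using int by (simp add: inner_diff_left mean prob_space)
qed

lemma feedback_seeds:
  assumes "t \<in> {1..T}" "i < N"
  shows "feedback (seeds \<omega>) i t = orc t (iterate (seeds \<omega>) i t) (X (Inr (t, Suc i)) \<omega>)"
  using assms by (simp add: fw_feedback_def seeds_def seed_idx_def)

lemma noise_term_bound:
  assumes "\<omega> \<in> space M" "i < N" "t \<in> {1..T}"
  shows "\<bar>noise_term (seeds \<omega>) i t\<bar> \<le> (\<sigma> + G) * D"
  unfolding noise_term_def feedback_seeds[OF assms(3,2)]
  by (rule oracle_noise_bound) (use assms iterate_in olo_point_in x_opt diam in auto)

text \<open>The regret bound R of hp_olo does not depend on the confidence level, so the learner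
  fails with probability below every positive level, that is, with probability zero.\<close>
lemma olo_failure_null:
  assumes k: "k < N" and g: "\<And>s. s \<in> {1..T} \<Longrightarrow> (norm (g s))\<^sup>2 \<le> \<sigma>\<^sup>2"
  shows "prob {\<omega> \<in> space M. R T < (\<Sum>t=1..T. g t \<bullet> (A (X (Inl (Suc k)) \<omega>) t g - x_opt))} = 0"
proof (rule prob_eq_0_if_avoided_with_prob_near_1)
  have "Inl (Suc k) \<in> seed_idx" using k by (simp add: seed_idx_def)
  moreover have "g \<in> space (PiM UNIV (\<lambda>_::nat. borel))" by (simp add: space_PiM)
  ultimately have [measurable]: "(\<lambda>\<omega>. A (X (Inl (Suc k)) \<omega>) t g) \<in> borel_measurable M" for t
    using measurable_comp[OF measurable_Pair[OF X_measurable measurable_const] A_meas[rule_format]]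
    by (simp add: comp_def)
  show "{\<omega> \<in> space M. R T < (\<Sum>t=1..T. g t \<bullet> (A (X (Inl (Suc k)) \<omega>) t g - x_opt))} \<in> events"
    by measurable
  fix e :: real assume "0 < e" "e < 1"
  then have "with_prob_at_least M (1 - e) (\<lambda>\<omega>. olo_regret K g (\<lambda>t. A (X (Inl (Suc k)) \<omega>) t g) T \<le> R T)"
    using olo k g unfolding hp_olo_def by auto
  then show "with_prob_at_least M (1 - e)
      (\<lambda>\<omega>. \<omega> \<notin> {\<omega> \<in> space M. R T < (\<Sum>t=1..T. g t \<bullet> (A (X (Inl (Suc k)) \<omega>) t g - x_opt))})"
  proof (rule with_prob_at_least_mono)
    fix \<omega> assume "olo_regret K g (\<lambda>t. A (X (Inl (Suc k)) \<omega>) t g) T \<le> R T"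
    with olo_regret_ge_comparator[OF K_compact x_opt, where n=T and g=g and v="\<lambda>t. A (X (Inl (Suc k)) \<omega>) t g"]
    show "\<omega> \<notin> {\<omega> \<in> space M. R T < (\<Sum>t=1..T. g t \<bullet> (A (X (Inl (Suc k)) \<omega>) t g - x_opt))}"
      by simp
  qed
qed

lemma linearized_olo_regret_upd_olo_seed:
  "(\<Sum>t=1..n. feedback (\<xi>(Inl (Suc k) := r)) k t \<bullet> (olo_point (\<xi>(Inl (Suc k) := r)) k t - x_opt))
     = (\<Sum>t=1..n. feedback \<xi> k t \<bullet> (A r t (feedback \<xi> k) - x_opt))"
proof (rule sum.cong[OF refl])
  fix t :: nat assume "t \<in> {1..n}"
  then have "1 \<le> t" by simp
  then show "feedback (\<xi>(Inl (Suc k) := r)) k t \<bullet> (olo_point (\<xi>(Inl (Suc k) := r)) k t - x_opt)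
      = feedback \<xi> k t \<bullet> (A r t (feedback \<xi> k) - x_opt)"
    by (simp only: feedback_upd_olo_seed olo_point_upd_olo_seed)
qed

lemma linearized_olo_regret_ae:
  assumes k: "k < N"
  shows "prob {\<omega> \<in> space M. R T < (\<Sum>t=1..T. feedback (seeds \<omega>) k t \<bullet> (olo_point (seeds \<omega>) k t - x_opt))} = 0"
proof -
  define j where "j = (Inl (Suc k) :: nat + nat \<times> nat)"
  have j: "j \<in> seed_idx" using k by (auto simp: seed_idx_def j_def)
  define B where "B = {\<xi> \<in> space seed_space. R T < (\<Sum>t=1..T. feedback \<xi> k t \<bullet> (olo_point \<xi> k t - x_opt))}"
  have B[measurable]: "B \<in> sets seed_space" unfolding B_def by measurable
  have "emeasure M {\<omega> \<in> space M. seeds \<omega> \<in> B} = (\<integral>\<^sup>+\<omega>. indicator B (seeds \<omega>) \<partial>M)"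
    by (rule emeasure_Collect_eq_nn_integral_indicator) measurable
  also have "\<dots> = (\<integral>\<^sup>+\<omega>. (\<integral>\<^sup>+\<omega>'. indicator B ((seeds \<omega>)(j := X j \<omega>')) \<partial>M) \<partial>M)"
    using nn_integral_resample_coordinate[OF indep_seeds j dummy_seed_in, of "indicator B"]
    by (simp add: seeds_def[abs_def])
  also have "\<dots> = (\<integral>\<^sup>+\<omega>. 0 \<partial>M)"
  proof (rule nn_integral_cong)
    fix \<omega> assume \<omega>: "\<omega> \<in> space M"
    define g where "g = feedback (seeds \<omega>) k"
    have resampled[measurable]: "(\<lambda>\<omega>'. (seeds \<omega>)(j := X j \<omega>')) \<in> M \<rightarrow>\<^sub>M seed_space"
      using \<omega> X_measurable[OF j] by (intro measurable_fun_upd[where J=UNIV]) auto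
    have membership: "(seeds \<omega>)(j := X j \<omega>') \<in> B \<longleftrightarrow> R T < (\<Sum>t=1..T. g t \<bullet> (A (X j \<omega>') t g - x_opt))"
      if "\<omega>' \<in> space M" for \<omega>'
      using measurable_space[OF resampled that]
      unfolding B_def j_def g_def mem_Collect_eq linearized_olo_regret_upd_olo_seed by blast
    have "(\<integral>\<^sup>+\<omega>'. indicator B ((seeds \<omega>)(j := X j \<omega>')) \<partial>M)
        = emeasure M {\<omega>' \<in> space M. (seeds \<omega>)(j := X j \<omega>') \<in> B}"
      by (rule emeasure_Collect_eq_nn_integral_indicator[symmetric]) measurable
    also have "{\<omega>' \<in> space M. (seeds \<omega>)(j := X j \<omega>') \<in> B}
        = {\<omega>' \<in> space M. R T < (\<Sum>t=1..T. g t \<bullet> (A (X j \<omega>') t g - x_opt))}"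
      using membership by blast
    also have "emeasure M \<dots> = 0"
    proof -
      have "(norm (g s))\<^sup>2 \<le> \<sigma>\<^sup>2" if "s \<in> {1..T}" for s
        using oracle_bound(2) that k \<omega> iterate_in by (simp add: g_def feedback_seeds)
      from olo_failure_null[OF k this] show ?thesis by (simp add: emeasure_eq_measure j_def)
    qed
    finally show "(\<integral>\<^sup>+\<omega>'. indicator B ((seeds \<omega>)(j := X j \<omega>')) \<partial>M) = 0" .
  qed
  finally have "emeasure M {\<omega> \<in> space M. seeds \<omega> \<in> B} = 0" by simp
  moreover have "{\<omega> \<in> space M. seeds \<omega> \<in> B}
      = {\<omega> \<in> space M. R T < (\<Sum>t=1..T. feedback (seeds \<omega>) k t \<bullet> (olo_point (seeds \<omega>) k t - x_opt))}"
    using measurable_space[OF seeds_measurable] by (auto simp: B_def)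
  ultimately show ?thesis by (simp add: emeasure_eq_measure)
qed

lemma noise_sum_mgf_step:
  assumes \<omega>: "\<omega> \<in> space M" and k: "k < N" and n: "n < T" and l: "0 < l"
  defines "j \<equiv> Inr (Suc n, Suc k)"
  shows "(\<integral>\<^sup>+\<omega>'. ennreal (exp (l * noise_sum ((seeds \<omega>)(j := X j \<omega>')) k (Suc n))) \<partial>M)
           \<le> ennreal (exp (l * noise_sum (seeds \<omega>) k n)) * ennreal (exp (l\<^sup>2 * ((\<sigma> + G) * D)\<^sup>2 / 2))"
proof -
  define x where "x = iterate (seeds \<omega>) k (Suc n)"
  define v where "v = olo_point (seeds \<omega>) k (Suc n) - x_opt"
  have "j \<in> seed_idx" using k n by (simp add: seed_idx_def j_def)
  then have "(\<lambda>\<omega>'. orc (Suc n) x (X j \<omega>')) \<in> borel_measurable M"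
    using measurable_comp[OF measurable_Pair[OF measurable_const X_measurable] orc_meas[rule_format]]
    by (simp add: comp_def)
  then have [measurable]: "(\<lambda>\<omega>'. ennreal (exp (l * ((grad (Suc n) x - orc (Suc n) x (X j \<omega>')) \<bullet> v))))
      \<in> borel_measurable M"
    by measurable
  have "(\<integral>\<^sup>+\<omega>'. ennreal (exp (l * noise_sum ((seeds \<omega>)(j := X j \<omega>')) k (Suc n))) \<partial>M)
      = (\<integral>\<^sup>+\<omega>'. ennreal (exp (l * noise_sum (seeds \<omega>) k n))
          * ennreal (exp (l * ((grad (Suc n) x - orc (Suc n) x (X j \<omega>')) \<bullet> v))) \<partial>M)"
    by (simp add: j_def noise_sum_upd_oracle_seed x_def v_def distrib_left exp_add ennreal_mult)
  also have "\<dots> = ennreal (exp (l * noise_sum (seeds \<omega>) k n))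
      * (\<integral>\<^sup>+\<omega>'. ennreal (exp (l * ((grad (Suc n) x - orc (Suc n) x (X j \<omega>')) \<bullet> v))) \<partial>M)"
    by (rule nn_integral_cmult) measurable
  also have "\<dots> \<le> ennreal (exp (l * noise_sum (seeds \<omega>) k n)) * ennreal (exp (l\<^sup>2 * ((\<sigma> + G) * D)\<^sup>2 / 2))"
    unfolding j_def
    by (intro mult_left_mono oracle_noise_mgf l)
       (use n k iterate_in olo_point_in x_opt diam in \<open>auto simp: x_def v_def\<close>)
  finally show ?thesis .
qed

lemma noise_sum_mgf:
  assumes k: "k < N" and l: "0 < l"
  shows "n \<le> T \<Longrightarrow> (\<integral>\<^sup>+\<omega>. ennreal (exp (l * noise_sum (seeds \<omega>) k n)) \<partial>M)
           \<le> ennreal (exp (l\<^sup>2 * (real n * ((\<sigma> + G) * D)\<^sup>2) / 2))"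
proof (induction n)
  case 0
  then show ?case by (simp add: noise_sum_def emeasure_space_1)
next
  case (Suc n)
  define j where "j = (Inr (Suc n, Suc k) :: nat + nat \<times> nat)"
  have j: "j \<in> seed_idx" using k Suc.prems by (auto simp: seed_idx_def j_def)
  define q where "q = l\<^sup>2 * ((\<sigma> + G) * D)\<^sup>2 / 2"
  have [measurable]: "(\<lambda>\<xi>. noise_sum \<xi> k n) \<in> borel_measurable seed_space"
    "(\<lambda>\<xi>. noise_sum \<xi> k (Suc n)) \<in> borel_measurable seed_space"
    using Suc.prems by (auto intro: measurable_noise_sum)
  have "(\<integral>\<^sup>+\<omega>. ennreal (exp (l * noise_sum (seeds \<omega>) k (Suc n))) \<partial>M)
      = (\<integral>\<^sup>+\<omega>. (\<integral>\<^sup>+\<omega>'. ennreal (exp (l * noise_sum ((seeds \<omega>)(j := X j \<omega>')) k (Suc n))) \<partial>M) \<partial>M)"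
    using nn_integral_resample_coordinate[OF indep_seeds j dummy_seed_in,
        of "\<lambda>\<xi>. ennreal (exp (l * noise_sum \<xi> k (Suc n)))"]
    by (simp add: seeds_def[abs_def])
  also have "\<dots> \<le> (\<integral>\<^sup>+\<omega>. ennreal (exp (l * noise_sum (seeds \<omega>) k n)) * ennreal (exp q) \<partial>M)"
    unfolding j_def q_def using Suc.prems by (intro nn_integral_mono noise_sum_mgf_step k l) auto
  also have "\<dots> = (\<integral>\<^sup>+\<omega>. ennreal (exp (l * noise_sum (seeds \<omega>) k n)) \<partial>M) * ennreal (exp q)"
    by (rule nn_integral_multc) measurable
  also have "\<dots> \<le> ennreal (exp (l\<^sup>2 * (real n * ((\<sigma> + G) * D)\<^sup>2) / 2)) * ennreal (exp q)"
    using Suc by (intro mult_right_mono) auto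
  also have "\<dots> = ennreal (exp (l\<^sup>2 * (real (Suc n) * ((\<sigma> + G) * D)\<^sup>2) / 2))"
    by (simp add: q_def ennreal_mult[symmetric] exp_add[symmetric] algebra_simps)
  finally show ?case .
qed

lemma noise_sum_tail:
  assumes k: "k < N" and \<delta>: "0 < \<delta>" "\<delta> < 1"
  shows "prob {\<omega> \<in> space M. (\<sigma> + G) * D * sqrt (2 * real T * ln (1 / \<delta>)) < noise_sum (seeds \<omega>) k T}
           \<le> \<delta>"
proof (cases "T = 0 \<or> (\<sigma> + G) * D = 0")
  case True
  have "noise_sum (seeds \<omega>) k T \<le> (\<Sum>t=1..T. (\<sigma> + G) * D)" if "\<omega> \<in> space M" for \<omega>
    unfolding noise_sum_def using noise_term_bound[OF that k] by (intro sum_mono) (simp add: abs_le_iff)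
  with True have empty:
    "{\<omega> \<in> space M. (\<sigma> + G) * D * sqrt (2 * real T * ln (1 / \<delta>)) < noise_sum (seeds \<omega>) k T} = {}"
    by force
  show ?thesis unfolding empty using \<delta> by simp
next
  case False
  then have "1 \<le> T" by simp
  then have "norm (grad 1 0) \<le> G" using grad_bound K_zero by simp
  then have "0 \<le> G" using norm_ge_zero[of "grad 1 0"] by linarith
  then have "0 \<le> (\<sigma> + G) * D" using oracle_bound(1) D_nonneg by simp
  with False have c: "0 < (\<sigma> + G) * D" by linarith
  define v where "v = real T * ((\<sigma> + G) * D)\<^sup>2"
  have v: "0 < v" using c False by (simp add: v_def)
  have f[measurable]: "(\<lambda>\<omega>. noise_sum (seeds \<omega>) k T) \<in> borel_measurable M"
    using measurable_noise_sum[of T k] by measurable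
  have "(\<sigma> + G) * D * sqrt (2 * real T * ln (1 / \<delta>)) = sqrt (2 * v * ln (1 / \<delta>))"
    using c by (simp add: v_def real_sqrt_mult mult_ac)
  then have "{\<omega> \<in> space M. (\<sigma> + G) * D * sqrt (2 * real T * ln (1 / \<delta>)) < noise_sum (seeds \<omega>) k T}
      \<subseteq> {\<omega> \<in> space M. sqrt (2 * v * ln (1 / \<delta>)) \<le> noise_sum (seeds \<omega>) k T}"
    by auto
  then have "prob {\<omega> \<in> space M. (\<sigma> + G) * D * sqrt (2 * real T * ln (1 / \<delta>)) < noise_sum (seeds \<omega>) k T}
      \<le> prob {\<omega> \<in> space M. sqrt (2 * v * ln (1 / \<delta>)) \<le> noise_sum (seeds \<omega>) k T}"
    by (rule finite_measure_mono) measurable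
  also have "\<dots> \<le> \<delta>"
  proof (rule subgaussian_tail_bound[OF f v _ \<delta>])
    show "(\<integral>\<^sup>+\<omega>. ennreal (exp (l * noise_sum (seeds \<omega>) k T)) \<partial>M) \<le> ennreal (exp (l\<^sup>2 * v / 2))"
      if "0 < l" for l
      using noise_sum_mgf[OF k that order_refl] by (simp add: v_def)
  qed
  finally show ?thesis .
qed

lemma linearized_regret_split:
  "(\<Sum>t=1..n. grad t (iterate \<xi> i t) \<bullet> (olo_point \<xi> i t - x_opt))
     = (\<Sum>t=1..n. feedback \<xi> i t \<bullet> (olo_point \<xi> i t - x_opt)) + noise_sum \<xi> i n"
  by (simp add: noise_sum_def noise_term_def inner_diff_left flip: sum.distrib)

lemma run_eq_seeds:
  assumes "i < N" "t \<le> T"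
  shows "run_iterate \<omega> i t = iterate (seeds \<omega>) i t" and "run_olo_point \<omega> i t = olo_point (seeds \<omega>) i t"
proof -
  have u: "X (Inl j) \<omega> = seeds \<omega> (Inl j)" if "j \<in> {1..Suc i}" for j
    using that assms by (simp add: seeds_def seed_idx_def)
  have z: "X (Inr (s, j)) \<omega> = seeds \<omega> (Inr (s, j))" if "s \<in> {1..<Suc T}" "j \<in> {1..Suc i}" for s j
    using that assms by (simp add: seeds_def seed_idx_def)
  show "run_iterate \<omega> i t = iterate (seeds \<omega>) i t"
    by (rule meta_fw_causal[OF A_causal, where t="Suc T"]) (use assms in \<open>simp_all add: u z\<close>)
  show "run_olo_point \<omega> i t = olo_point (seeds \<omega>) i t"
    by (rule fw_olo_point_causal[OF A_causal, where t="Suc T"]) (use assms in \<open>simp_all add: u z\<close>)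
qed

definition linearized_failure :: "nat \<Rightarrow> real \<Rightarrow> 'm set" where
  "linearized_failure k \<delta> =
     {\<omega> \<in> space M. R T < (\<Sum>t=1..T. feedback (seeds \<omega>) k t \<bullet> (olo_point (seeds \<omega>) k t - x_opt))}
     \<union> {\<omega> \<in> space M. (\<sigma> + G) * D * sqrt (2 * real T * ln (1 / \<delta>)) < noise_sum (seeds \<omega>) k T}"

lemma linearized_failure_event: "linearized_failure k \<delta> \<in> events"
  unfolding linearized_failure_def using measurable_noise_sum[of T k] by measurable

lemma prob_linearized_failure:
  assumes "k < N" "0 < \<delta>" "\<delta> < 1"
  shows "prob (linearized_failure k \<delta>) \<le> \<delta>"
proof -
  have regret: "{\<omega> \<in> space M. R T < (\<Sum>t=1..T. feedback (seeds \<omega>) k t \<bullet> (olo_point (seeds \<omega>) k t - x_opt))}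
      \<in> events"
    by measurable
  have noise: "{\<omega> \<in> space M. (\<sigma> + G) * D * sqrt (2 * real T * ln (1 / \<delta>)) < noise_sum (seeds \<omega>) k T}
      \<in> events"
    using measurable_noise_sum[of T k] by measurable
  have "prob (linearized_failure k \<delta>)
      \<le> prob {\<omega> \<in> space M. R T < (\<Sum>t=1..T. feedback (seeds \<omega>) k t \<bullet> (olo_point (seeds \<omega>) k t - x_opt))}
        + prob {\<omega> \<in> space M. (\<sigma> + G) * D * sqrt (2 * real T * ln (1 / \<delta>)) < noise_sum (seeds \<omega>) k T}"
    unfolding linearized_failure_def by (rule measure_Un_le[OF regret noise])
  then show ?thesis
    using linearized_olo_regret_ae[OF assms(1)] noise_sum_tail[OF assms] by linarith
qed

lemma linearized_regret_outside_failure: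
  assumes \<omega>: "\<omega> \<in> space M - linearized_failure i \<delta>" and i: "i < N"
  shows "(\<Sum>t=1..T. grad t (run_iterate \<omega> i t) \<bullet> (run_olo_point \<omega> i t - x_opt))
           \<le> R T + (\<sigma> + G) * D * sqrt (2 * real T * ln (1 / \<delta>))"
proof -
  have regret: "(\<Sum>t=1..T. feedback (seeds \<omega>) i t \<bullet> (olo_point (seeds \<omega>) i t - x_opt)) \<le> R T"
    and noise: "noise_sum (seeds \<omega>) i T \<le> (\<sigma> + G) * D * sqrt (2 * real T * ln (1 / \<delta>))"
    using \<omega> by (auto simp: linearized_failure_def not_less)
  have "(\<Sum>t=1..T. grad t (run_iterate \<omega> i t) \<bullet> (run_olo_point \<omega> i t - x_opt))
      = (\<Sum>t=1..T. grad t (iterate (seeds \<omega>) i t) \<bullet> (olo_point (seeds \<omega>) i t - x_opt))"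
    using run_eq_seeds[OF i] by (intro sum.cong) auto
  also have "\<dots> \<le> R T + (\<sigma> + G) * D * sqrt (2 * real T * ln (1 / \<delta>))"
    unfolding linearized_regret_split using regret noise by (rule add_mono)
  finally show ?thesis .
qed

theorem linearized_regret_whp:
  assumes \<rho>: "0 < \<rho>" "\<rho> < 1"
  shows "with_prob_at_least M (1 - \<rho>) (\<lambda>\<omega>. \<forall>i<N.
           (\<Sum>t=1..T. grad t (run_iterate \<omega> i t) \<bullet> (run_olo_point \<omega> i t - x_opt))
             \<le> R T + (\<sigma> + G) * D * sqrt (2 * real T * ln (4 * real N / \<rho>)))"
proof -
  define \<delta> where "\<delta> = \<rho> / (4 * real N)"
  have \<delta>: "0 < \<delta>" "\<delta> < 1" "1 / \<delta> = 4 * real N / \<rho>" using \<rho> N by (auto simp: \<delta>_def)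
  define E where "E = space M - (\<Union>k<N. linearized_failure k \<delta>)"
  have "prob (\<Union>k<N. linearized_failure k \<delta>) \<le> (\<Sum>k<N. prob (linearized_failure k \<delta>))"
    by (rule measure_UNION_le) (auto intro: linearized_failure_event)
  also have "\<dots> \<le> (\<Sum>k<N. \<delta>)"
    using \<delta> by (intro sum_mono prob_linearized_failure) auto
  also have "\<dots> \<le> \<rho>"
    using N \<rho> by (simp add: \<delta>_def)
  finally have "prob (\<Union>k<N. linearized_failure k \<delta>) \<le> \<rho>" .
  moreover have failure: "(\<Union>k<N. linearized_failure k \<delta>) \<in> events"
    by (auto intro!: sets.finite_UN linearized_failure_event)
  ultimately have "1 - \<rho> \<le> prob E"
    unfolding E_def using prob_compl[OF failure] by simp
  moreover have "E \<in> events" unfolding E_def using failure by blast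
  moreover have "(\<Sum>t=1..T. grad t (run_iterate \<omega> i t) \<bullet> (run_olo_point \<omega> i t - x_opt))
      \<le> R T + (\<sigma> + G) * D * sqrt (2 * real T * ln (4 * real N / \<rho>))"
    if "\<omega> \<in> E" "i < N" for \<omega> i
  proof -
    from that have "\<omega> \<in> space M - linearized_failure i \<delta>" by (auto simp: E_def)
    from linearized_regret_outside_failure[OF this \<open>i < N\<close>] show ?thesis unfolding \<delta>(3) .
  qed
  ultimately show ?thesis
    unfolding with_prob_at_least_def by blast
qed

end

theorem proposition2:
  fixes K :: "'a::euclidean_space set" and D \<beta> G \<sigma> \<rho> :: real
    and loss :: "nat \<Rightarrow> 'a \<Rightarrow> real" and grad :: "nat \<Rightarrow> 'a \<Rightarrow> 'a"
    and M :: "'m measure" and S :: "'r measure" and X :: "nat + nat \<times> nat \<Rightarrow> 'm \<Rightarrow> 'r"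
    and orc :: "nat \<Rightarrow> 'a \<Rightarrow> 'r \<Rightarrow> 'a" and A :: "'r \<Rightarrow> nat \<Rightarrow> (nat \<Rightarrow> 'a) \<Rightarrow> 'a"
    and R :: "nat \<Rightarrow> real" and N T :: nat
  assumes K_compact: "compact K" and K_convex: "convex K" and K_zero: "0 \<in> K"
    and diam: "\<forall>x\<in>K. \<forall>x'\<in>K. norm (x - x') \<le> D"
    and loss_convex: "\<forall>t\<in>{1..T}. convex_on K (loss t)"
    and loss_grad: "\<forall>t\<in>{1..T}. \<forall>x\<in>K. (loss t has_derivative (\<lambda>h. grad t x \<bullet> h)) (at x within K)"
    and grad_bound: "\<forall>t\<in>{1..T}. \<forall>x\<in>K. norm (grad t x) \<le> G"
    and smooth: "0 \<le> \<beta>" "\<forall>t\<in>{1..T}. \<forall>x\<in>K. \<forall>x'\<in>K. norm (grad t x - grad t x') \<le> \<beta> * norm (x - x')"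
    and M: "prob_space M"
    and indep: "prob_space.indep_vars M (\<lambda>_. S) X (Inl ` {1..N} \<union> Inr ` ({1..T} \<times> {1..N}))"
    and orc_meas: "\<forall>t. (\<lambda>(x, w). orc t x w) \<in> borel \<Otimes>\<^sub>M S \<rightarrow>\<^sub>M borel"
    and unbiased: "\<forall>t\<in>{1..T}. \<forall>i\<in>{1..N}. \<forall>x\<in>K.
                     integrable M (\<lambda>\<omega>. orc t x (X (Inr (t, i)) \<omega>)) \<and>
                     (\<integral>\<omega>. orc t x (X (Inr (t, i)) \<omega>) \<partial>M) = grad t x"
    and oracle_bound: "0 \<le> \<sigma>" "\<forall>t\<in>{1..T}. \<forall>i\<in>{1..N}. \<forall>x\<in>K. \<forall>\<omega>\<in>space M.
                     (norm (orc t x (X (Inr (t, i)) \<omega>)))\<^sup>2 \<le> \<sigma>\<^sup>2"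
    and A_meas: "\<forall>t. (\<lambda>(r, g). A r t g) \<in> S \<Otimes>\<^sub>M PiM UNIV (\<lambda>_::nat. borel) \<rightarrow>\<^sub>M borel"
    and olo: "\<forall>i\<in>{1..N}. hp_olo M K \<sigma> A (X (Inl i)) R"
    and N: "N \<ge> 1"
    and \<rho>: "0 < \<rho>" "\<rho> < 1"
  shows "with_prob_at_least M (1 - \<rho>) (\<lambda>\<omega>.
           (\<Sum>t=1..T. loss t (meta_fw A orc (\<lambda>i. X (Inl i) \<omega>) (\<lambda>t i. X (Inr (t, i)) \<omega>) N t))
             - (INF y\<in>K. \<Sum>t=1..T. loss t y)
           \<le> 2 * \<beta> * D\<^sup>2 * real T / real N + R T
              + (\<sigma> + G) * D * sqrt (2 * real T * ln (4 * real N / \<rho>)))"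
proof -
  have "continuous_on K (\<lambda>y. \<Sum>t=1..T. loss t y)"
    by (intro continuous_on_sum has_derivative_continuous_on) (use loss_grad in blast)
  then obtain x_opt where x_opt: "x_opt \<in> K"
    and minimum: "(INF y\<in>K. \<Sum>t=1..T. loss t y) = (\<Sum>t=1..T. loss t x_opt)"
    using compact_INF_attained[OF K_compact] K_zero by blast
  have grad_cont: "\<forall>t\<in>{1..T}. continuous_on K (grad t)"
    using smooth by (auto intro!: lipschitz_on_continuous_on simp: lipschitz_on_def dist_norm)
  interpret stochastic_meta_fw M K D G \<sigma> grad S X orc A R N T x_opt
    by (rule stochastic_meta_fw.intro[OF M stochastic_meta_fw_axioms.intro]) (fact+)
  from linearized_regret_whp[OF \<rho>] show ?thesis
  proof (rule with_prob_at_least_mono)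
    fix \<omega> assume "\<forall>i<N. (\<Sum>t=1..T. grad t (run_iterate \<omega> i t) \<bullet> (run_olo_point \<omega> i t - x_opt))
      \<le> R T + (\<sigma> + G) * D * sqrt (2 * real T * ln (4 * real N / \<rho>))"
    then have "(\<Sum>t=1..T. loss t (run_iterate \<omega> N t)) - (\<Sum>t=1..T. loss t x_opt)
      \<le> R T + (\<sigma> + G) * D * sqrt (2 * real T * ln (4 * real N / \<rho>)) + 2 * \<beta> * D\<^sup>2 * real T / real N"
      by (intro meta_fw_loss_bound[OF K_convex K_zero A_in x_opt])
         (use diam loss_convex loss_grad smooth N in auto)
    then show "(\<Sum>t=1..T. loss t (run_iterate \<omega> N t)) - (INF y\<in>K. \<Sum>t=1..T. loss t y)
      \<le> 2 * \<beta> * D\<^sup>2 * real T / real N + R T + (\<sigma> + G) * D * sqrt (2 * real T * ln (4 * real N / \<rho>))"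
      unfolding minimum by linarith
  qed
qed

end
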